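(* Let $n\ge3$, let $i\ge 0$ be an integer with $i>(n-4)(n-1)$, and let $1\le k\le n$. Then \[|\mathcal{L}_i\cap\mathcal{B}_k|=b_{r_i+k-n-1}\qquad\text{and}\qquad |\mathcal{L}_i|=c_{r_i-1}.\]
   Context: Fix an integer $n\ge 3$. A partition is a sequence $\Lambda=(\lambda_j)_{j\ge1}$ of non-negative integers with finite support; $\mathrm{wt}(\Lambda)=\sum_j j\lambda_j$; $\mathrm{Part}(k)$ is the set of partitions with $\lambda_j=0$ for $j>k$. Write $x^\Lambda=\prod_j x_j^{\lambda_j}$, $\deg(x^\Lambda)=\sum_j\lambda_j$, and $\partial_k$ for the formal symbol of partial derivative in $x_k$. $\mathcal{B}=\{x^\Lambda\partial_k : 1\le k\le n,\ \Lambda\in\mathrm{Part}(k-1)\}$ and $\mathcal{B}_u=\{x^\Lambda\partial_k\in\mathcal{B}: k=u\}$. For an integer $i\ge-1$, let $r_i\in\{1,\dots,n-1\}$ with $i\equiv r_i\pmod{n-1}$ and $h_i=\lfloor (i-1)/(n-1)\rfloor+1$. Define $\mathrm{WD}(x^\Lambda\partial_k)=\mathrm{wt}(\Lambda)-\deg(x^\Lambda)+n-k$ and $\mathrm{lev}_i(x^\Lambda\partial_k)=h_i\,\mathrm{WD}(x^\Lambda\partial_k)+\deg(x^\Lambda)-1$. For $i\ge-1$, $\mathcal{N}_i=\{b\in\mathcal{B}: \mathrm{lev}_j(b)\le j\text{ for some integer } -1\le j\le i\}$, and $\mathcal{L}_i=\mathcal{N}_i\setminus\mathcal{N}_{i-1}$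 for $i\ge0$. Let $a_m$ be the number of partitions of $m\ge0$ ($a_0=1$), $b_m=\sum_{j=0}^m a_j$, $c_m=\sum_{j=0}^m b_j$, with the convention $b_m=0$ for $m<0$. *)

theory Defs
  imports Complex_Main
begin

text \<open>A partition is a finitely supported sequence (lambda_j) indexed by j >= 1;
  we represent it as a function nat => nat whose value at 0 is 0.
  Part(k): lambda_j = 0 for j > k.\<close>

definition Part :: "nat \<Rightarrow> (nat \<Rightarrow> nat) set" where
  "Part k = {L. L 0 = 0 \<and> (\<forall>j>k. L j = 0)}"

text \<open>Basis element x^L d_k is represented by the pair (L, k).\<close>

definition BB :: "nat \<Rightarrow> ((nat \<Rightarrow> nat) \<times> nat) set" where
  "BB n = {(L, k). 1 \<le> k \<and> k \<le> n \<and> L \<in> Part (k - 1)}"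

definition BBu :: "nat \<Rightarrow> nat \<Rightarrow> ((nat \<Rightarrow> nat) \<times> nat) set" where
  "BBu n u = {b \<in> BB n. snd b = u}"

definition wt :: "(nat \<Rightarrow> nat) \<times> nat \<Rightarrow> int" where
  "wt b = (\<Sum>j\<in>{1..<snd b}. int j * int (fst b j))"

definition dg :: "(nat \<Rightarrow> nat) \<times> nat \<Rightarrow> int" where
  "dg b = (\<Sum>j\<in>{1..<snd b}. int (fst b j))"

definition WD :: "nat \<Rightarrow> (nat \<Rightarrow> nat) \<times> nat \<Rightarrow> int" where
  "WD n b = wt b - dg b + int n - int (snd b)"

definition rr :: "nat \<Rightarrow> int \<Rightarrow> int" where
  "rr n i = (i - 1) mod (int n - 1) + 1"

definition hh :: "nat \<Rightarrow> int \<Rightarrow> int" where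
  "hh n i = \<lfloor>of_int (i - 1) / (of_int (int n - 1) :: real)\<rfloor> + 1"

definition lev :: "nat \<Rightarrow> int \<Rightarrow> (nat \<Rightarrow> nat) \<times> nat \<Rightarrow> int" where
  "lev n i b = hh n i * WD n b + dg b - 1"

definition NN :: "nat \<Rightarrow> int \<Rightarrow> ((nat \<Rightarrow> nat) \<times> nat) set" where
  "NN n i = {b \<in> BB n. \<exists>j::int. -1 \<le> j \<and> j \<le> i \<and> lev n j b \<le> j}"

definition LL :: "nat \<Rightarrow> int \<Rightarrow> ((nat \<Rightarrow> nat) \<times> nat) set" where
  "LL n i = NN n i - NN n (i - 1)"

definition pa :: "nat \<Rightarrow> nat" where
  "pa m = card {L \<in> Part m. (\<Sum>j\<in>{1..m}. j * L j) = m}"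

definition pb :: "int \<Rightarrow> nat" where
  "pb m = (if m < 0 then 0 else (\<Sum>j\<in>{0..nat m}. pa j))"

definition pc :: "int \<Rightarrow> nat" where
  "pc m = (\<Sum>j\<in>{0..m}. pb j)"

end

theory Submission
  imports Defs
begin

text \<open>Write E(b) = n - 1 - WD(b) and j = (h_j - 1)(n - 1) + r_j. Then lev_j(b) \<le> j reads
  deg b + n - 2 \<le> h_j E(b) + r_j, whose right side is a sawtooth in j. Since E(b) \<le> n - 1, the
  first index reaching the threshold is i exactly when E(b) \<ge> n - r_i and
  deg b = h_i E(b) + 2 - (n - r_i). For b = x^\<Lambda> \<partial>_k, removing the parts 1 of \<Lambda> and lowering
  the other parts by one gives a partition \<mu> of weight k - 1 - E(b), and the condition fixes
  the number of parts 1 in terms of \<mu>; once h_i \<ge> n - 3 that number is never negative. So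
  L_i \<inter> B_k is in bijection with the partitions of weight at most r_i + k - n - 1, counted by
  b, and summing over k gives c.\<close>

lemma hh_eq_div: "hh n j = (j - 1) div (int n - 1) + 1"
  unfolding hh_def floor_divide_of_int_eq ..

lemma hh_rr_decomp: "j = (hh n j - 1) * (int n - 1) + rr n j"
  using div_mult_mod_eq[of "j - 1" "int n - 1"] unfolding hh_eq_div rr_def by simp

lemma rr_bounds:
  assumes "2 \<le> n"
  shows "1 \<le> rr n j \<and> rr n j \<le> int n - 1"
proof -
  have "0 < int n - 1" using assms by simp
  then show ?thesis
    using pos_mod_bound[of "int n - 1" "j - 1"] pos_mod_sign[of "int n - 1" "j - 1"]
    unfolding rr_def by linarith
qed

lemma hh_pos: "2 \<le> n \<Longrightarrow> 1 \<le> j \<Longrightarrow> 1 \<le> hh n j"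
  unfolding hh_eq_div by (simp add: pos_imp_zdiv_nonneg_iff)

lemma hh_rr_unique:
  assumes "2 \<le> n" "1 \<le> r" "r \<le> int n - 1" "j = (h - 1) * (int n - 1) + r"
  shows "hh n j = h \<and> rr n j = r"
proof -
  have j: "j - 1 = (r - 1) + (h - 1) * (int n - 1)" using assms(4) by simp
  have "(r - 1) div (int n - 1) = 0" "(r - 1) mod (int n - 1) = r - 1"
    using assms by (simp_all add: div_pos_pos_trivial mod_pos_pos_trivial)
  then show ?thesis
    unfolding hh_eq_div rr_def j using assms(1) by simp
qed

lemma hh_nonpos_index: "3 \<le> n \<Longrightarrow> -1 \<le> j \<Longrightarrow> j \<le> 0 \<Longrightarrow> hh n j = 0"
  using hh_rr_unique[of n "j + int n - 1" j 0] by simp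

lemma rr_zero: "3 \<le> n \<Longrightarrow> rr n 0 = int n - 1"
  using hh_rr_unique[of n "int n - 1" 0 0] by simp

lemma all_pos_index_iff:
  assumes "2 \<le> n"
  shows "(\<forall>j. 1 \<le> j \<and> j < i \<longrightarrow> Q (hh n j) (rr n j))
    \<longleftrightarrow> (\<forall>h r. 1 \<le> h \<and> 1 \<le> r \<and> r \<le> int n - 1 \<and> (h - 1) * (int n - 1) + r < i \<longrightarrow> Q h r)"
proof
  assume Q: "\<forall>j. 1 \<le> j \<and> j < i \<longrightarrow> Q (hh n j) (rr n j)"
  show "\<forall>h r. 1 \<le> h \<and> 1 \<le> r \<and> r \<le> int n - 1 \<and> (h - 1) * (int n - 1) + r < i \<longrightarrow> Q h r"
  proof (intro allI impI)
    fix h r assume hr: "1 \<le> h \<and> 1 \<le> r \<and> r \<le> int n - 1 \<and> (h - 1) * (int n - 1) + r < i"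
    define j where "j = (h - 1) * (int n - 1) + r"
    have "0 \<le> (h - 1) * (int n - 1)" using hr assms by (simp add: mult_nonneg_nonneg)
    then have "1 \<le> j" using hr unfolding j_def by linarith
    then show "Q h r" using Q hh_rr_unique[OF assms _ _ j_def] hr unfolding j_def by auto
  qed
next
  assume Q: "\<forall>h r. 1 \<le> h \<and> 1 \<le> r \<and> r \<le> int n - 1 \<and> (h - 1) * (int n - 1) + r < i \<longrightarrow> Q h r"
  show "\<forall>j. 1 \<le> j \<and> j < i \<longrightarrow> Q (hh n j) (rr n j)"
    using Q hh_pos[OF assms] rr_bounds[OF assms] hh_rr_decomp[of _ n] by metis
qed

lemma hh_lower_bound:
  assumes "2 \<le> n" "(int n - 4) * (int n - 1) < i"
  shows "int n - 3 \<le> hh n i"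
proof -
  have "i \<le> hh n i * (int n - 1)"
    using hh_rr_decomp[of i n] rr_bounds[OF assms(1), of i] by (simp add: algebra_simps)
  then have "(int n - 4) * (int n - 1) < hh n i * (int n - 1)" using assms(2) by linarith
  then show ?thesis using assms(1) by (simp add: mult_less_cancel_right)
qed

lemma wt_minus_dg: "wt b - dg b = (\<Sum>j\<in>{1..<snd b}. (int j - 1) * int (fst b j))"
  unfolding wt_def dg_def by (simp add: sum_subtractf[symmetric] algebra_simps)

lemma dg_nonneg: "0 \<le> dg b"
  unfolding dg_def by (rule sum_nonneg) simp

lemma dg_le_wt: "dg b \<le> wt b"
  using sum_nonneg[of "{1..<snd b}" "\<lambda>j. (int j - 1) * int (fst b j)"]
  unfolding wt_minus_dg[symmetric] by simp

lemma wt_minus_dg_le: "wt b - dg b \<le> (int (snd b) - 2) * dg b"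
proof -
  have "wt b - dg b \<le> (\<Sum>j\<in>{1..<snd b}. (int (snd b) - 2) * int (fst b j))"
    unfolding wt_minus_dg by (rule sum_mono) (auto intro: mult_right_mono)
  also have "\<dots> = (int (snd b) - 2) * dg b"
    unfolding dg_def by (simp add: sum_distrib_left)
  finally show ?thesis .
qed

lemma WD_nonneg: "b \<in> BB n \<Longrightarrow> 0 \<le> WD n b"
  using dg_le_wt[of b] unfolding WD_def BB_def by auto

lemma mem_LL_iff_first_reached:
  "0 \<le> i \<Longrightarrow> b \<in> LL n i \<longleftrightarrow>
     b \<in> BB n \<and> lev n i b \<le> i \<and> (\<forall>j. -1 \<le> j \<and> j < i \<longrightarrow> \<not> lev n j b \<le> j)"
  unfolding LL_def NN_def by auto (metis le_less)

lemma lev_le_iff: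
  "lev n j b \<le> j \<longleftrightarrow> dg b + int n - 2 \<le> hh n j * (int n - 1 - WD n b) + rr n j"
proof -
  have "lev n j b \<le> j \<longleftrightarrow> hh n j * WD n b + dg b - 1 \<le> (hh n j - 1) * (int n - 1) + rr n j"
    unfolding lev_def by (subst (2) hh_rr_decomp[of j n]) simp
  then show ?thesis by (simp add: algebra_simps)
qed

text \<open>The pairs (h, r) with h \<ge> 1 and 1 \<le> r \<le> N enumerate the positive integers as
  (h - 1) N + r; the left side says that (h, r) is the first of them at which the sawtooth
  h E + r reaches c.\<close>
lemma sawtooth_first_reach:
  fixes N E c h r :: int
  assumes "E \<le> N" "1 \<le> h" "1 \<le> r" "r \<le> N"
  shows "(N < c \<and> c \<le> h * E + r \<and>
      (\<forall>h' r'. 1 \<le> h' \<and> 1 \<le> r' \<and> r' \<le> N \<and> (h' - 1) * N + r' < (h - 1) * N + r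
         \<longrightarrow> h' * E + r' < c))
    \<longleftrightarrow> N < E + r \<and> c = h * E + r"
proof
  assume "N < c \<and> c \<le> h * E + r \<and>
      (\<forall>h' r'. 1 \<le> h' \<and> 1 \<le> r' \<and> r' \<le> N \<and> (h' - 1) * N + r' < (h - 1) * N + r
         \<longrightarrow> h' * E + r' < c)"
  then have c: "N < c" "c \<le> h * E + r"
    and below: "\<And>h' r'. 1 \<le> h' \<Longrightarrow> 1 \<le> r' \<Longrightarrow> r' \<le> N \<Longrightarrow>
      (h' - 1) * N + r' < (h - 1) * N + r \<Longrightarrow> h' * E + r' < c"
    by auto
  have prev_tooth: "(h - 1) * E + N < c" if "2 \<le> h"
    using below[of "h - 1" N] that assms by (simp add: algebra_simps)
  have hit: "c = h * E + r"
  proof (rule ccontr)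
    assume "c \<noteq> h * E + r"
    then have short: "c \<le> h * E + r - 1" using c by simp
    consider "2 \<le> r" | "r = 1" "2 \<le> h" | "r = 1" "h = 1" using assms by linarith
    then show False
    proof cases
      case 1
      then show False using below[of h "r - 1"] short assms by simp
    next
      case 2
      then show False using prev_tooth short assms by (simp add: algebra_simps)
    next
      case 3
      then show False using short c assms by simp
    qed
  qed
  have "N < E + r"
  proof (cases "2 \<le> h")
    case True
    then show ?thesis using prev_tooth hit by (simp add: algebra_simps)
  next
    case False
    then have "h = 1" using assms by simp
    then show ?thesis using hit c by simp
  qed
  then show "N < E + r \<and> c = h * E + r" using hit by simp
next
  assume "N < E + r \<and> c = h * E + r"
  then have E: "N < E + r" and c: "c = h * E + r" by auto
  have "E \<le> h * E" using E assms by (simp add: mult_le_cancel_right1)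
  then have "N < c" using E c by simp
  moreover have "h' * E + r' < c"
    if "1 \<le> h'" "1 \<le> r'" "r' \<le> N" and earlier: "(h' - 1) * N + r' < (h - 1) * N + r" for h' r'
  proof -
    consider "h < h'" | "h' = h" | "h' < h" by linarith
    then show ?thesis
    proof cases
      case 1
      then have "h * N \<le> (h' - 1) * N" using assms by (simp add: mult_right_mono)
      then show ?thesis using earlier that assms by (simp add: algebra_simps)
    next
      case 2
      then show ?thesis using earlier c by simp
    next
      case 3
      then have "h' * E \<le> (h - 1) * E" using E assms by (simp add: mult_right_mono)
      then show ?thesis using that E c by (simp add: algebra_simps)
    qed
  qed
  ultimately show "N < c \<and> c \<le> h * E + r \<and>
      (\<forall>h' r'. 1 \<le> h' \<and> 1 \<le> r' \<and> r' \<le> N \<and> (h' - 1) * N + r' < (h - 1) * N + r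
         \<longrightarrow> h' * E + r' < c)" using c by auto
qed

lemma LL_subset_BB: "LL n i \<subseteq> BB n"
  unfolding LL_def NN_def by auto

lemma lev_nonpos_index: "3 \<le> n \<Longrightarrow> -1 \<le> j \<Longrightarrow> j \<le> 0 \<Longrightarrow> lev n j b = dg b - 1"
  unfolding lev_def by (simp add: hh_nonpos_index)

lemma mem_LL_zero: "3 \<le> n \<Longrightarrow> b \<in> LL n 0 \<longleftrightarrow> b \<in> BB n \<and> dg b = 1"
  unfolding mem_LL_iff_first_reached[OF order_refl]
  by (auto simp: lev_nonpos_index dg_nonneg)

lemma mem_LL_pos:
  assumes n: "3 \<le> n" and i: "1 \<le> i" and b: "b \<in> BB n"
  shows "b \<in> LL n i \<longleftrightarrow> int n - 1 < (int n - 1 - WD n b) + rr n i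
    \<and> dg b + int n - 2 = hh n i * (int n - 1 - WD n b) + rr n i"
proof -
  define N E c where "N = int n - 1" and "E = int n - 1 - WD n b" and "c = dg b + int n - 2"
  have reach: "lev n j b \<le> j \<longleftrightarrow> c \<le> hh n j * E + rr n j" for j
    unfolding lev_le_iff c_def E_def ..
  have "(\<forall>j. -1 \<le> j \<and> j < i \<longrightarrow> \<not> lev n j b \<le> j) \<longleftrightarrow>
      (\<forall>j\<in>{-1, 0}. \<not> lev n j b \<le> j) \<and> (\<forall>j. 1 \<le> j \<and> j < i \<longrightarrow> \<not> lev n j b \<le> j)"
  proof -
    have "-1 \<le> j \<and> j < i \<longleftrightarrow> j \<in> {-1, 0} \<or> 1 \<le> j \<and> j < i" for j
      using i by auto
    then show ?thesis by blast
  qed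
  also have "(\<forall>j\<in>{-1, 0}. \<not> lev n j b \<le> j) \<longleftrightarrow> N < c"
    using n by (auto simp: lev_nonpos_index N_def c_def)
  also have "(\<forall>j. 1 \<le> j \<and> j < i \<longrightarrow> \<not> lev n j b \<le> j) \<longleftrightarrow>
      (\<forall>h' r'. 1 \<le> h' \<and> 1 \<le> r' \<and> r' \<le> N \<and> (h' - 1) * N + r' < (hh n i - 1) * N + rr n i
         \<longrightarrow> h' * E + r' < c)"
    using all_pos_index_iff[of n i "\<lambda>h r. h * E + r < c"] n
    unfolding reach N_def by (simp add: not_le flip: hh_rr_decomp)
  finally have "b \<in> LL n i \<longleftrightarrow> N < c \<and> c \<le> hh n i * E + rr n i \<and>
      (\<forall>h' r'. 1 \<le> h' \<and> 1 \<le> r' \<and> r' \<le> N \<and> (h' - 1) * N + r' < (hh n i - 1) * N + rr n i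
         \<longrightarrow> h' * E + r' < c)"
    unfolding mem_LL_iff_first_reached[OF order_trans[OF zero_le_one i]] reach
    using b by auto
  also have "\<dots> \<longleftrightarrow> N < E + rr n i \<and> c = hh n i * E + rr n i"
    by (rule sawtooth_first_reach)
      (use WD_nonneg[OF b] hh_pos[of n i] rr_bounds[of n i] n i in \<open>simp_all add: N_def E_def\<close>)
  finally show ?thesis unfolding N_def E_def c_def .
qed

lemma mem_LL_iff:
  assumes n: "3 \<le> n" and i: "0 \<le> i"
  shows "b \<in> LL n i \<longleftrightarrow> b \<in> BB n \<and> int n - rr n i \<le> int n - 1 - WD n b
    \<and> dg b = hh n i * (int n - 1 - WD n b) + 2 - (int n - rr n i)"
proof (cases "i = 0")
  case True
  have "1 \<le> int n - 1 - WD n b" if "b \<in> BB n" "dg b = 1"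
    using wt_minus_dg_le[of b] that unfolding WD_def by simp
  then show ?thesis
    using True mem_LL_zero[OF n] rr_zero[OF n] hh_nonpos_index[OF n] by auto
next
  case False
  then have i1: "1 \<le> i" using i by simp
  show ?thesis
  proof (cases "b \<in> BB n")
    case True
    then show ?thesis using mem_LL_pos[OF n i1 True] by arith
  qed (use LL_subset_BB in blast)
qed

lemma Part_mono: "K \<le> K' \<Longrightarrow> Part K \<subseteq> Part K'"
  unfolding Part_def by auto

lemma wt_Suc: "wt (\<mu>, Suc K) = int (\<Sum>j = 1..K. j * \<mu> j)"
  unfolding wt_def by (simp add: atLeastLessThanSuc_atLeastAtMost)

lemma Part_of_weight_le:
  assumes "\<mu> \<in> Part K" "(\<Sum>j = 1..K. j * \<mu> j) \<le> q"
  shows "\<mu> \<in> Part q"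
proof -
  have "\<mu> j = 0" if "q < j" for j
  proof (cases "j \<le> K")
    case True
    with that have "j * \<mu> j \<le> q"
      using member_le_sum[of j "{1..K}" "\<lambda>j. j * \<mu> j"] assms(2) by simp
    with that show ?thesis by (cases "\<mu> j") auto
  next
    case False
    then show ?thesis using assms(1) unfolding Part_def by simp
  qed
  then show ?thesis using assms(1) unfolding Part_def by simp
qed

lemma weight_Part_eq:
  assumes "\<mu> \<in> Part q" "q \<le> K"
  shows "(\<Sum>j = 1..K. j * \<mu> j) = (\<Sum>j = 1..q. j * \<mu> j)"
  by (rule sum.mono_neutral_right) (use assms in \<open>auto simp: Part_def\<close>)

lemma finite_Part_weight_le: "finite {\<mu> \<in> Part K. (\<Sum>j = 1..K. j * \<mu> j) \<le> m}"
proof (rule finite_subset)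
  show "{\<mu> \<in> Part K. (\<Sum>j = 1..K. j * \<mu> j) \<le> m}
      \<subseteq> {f. \<forall>x. (x \<in> {1..K} \<longrightarrow> f x \<in> {0..m}) \<and> (x \<notin> {1..K} \<longrightarrow> f x = 0)}"
  proof (intro subsetI CollectI allI conjI impI)
    fix \<mu> x assume "\<mu> \<in> {\<mu> \<in> Part K. (\<Sum>j = 1..K. j * \<mu> j) \<le> m}"
    then have \<mu>: "\<mu> \<in> Part K" "(\<Sum>j = 1..K. j * \<mu> j) \<le> m" by auto
    show "\<mu> x \<in> {0..m}" if x: "x \<in> {1..K}"
    proof -
      have "\<mu> x \<le> x * \<mu> x" using x by simp
      moreover have "x * \<mu> x \<le> (\<Sum>j = 1..K. j * \<mu> j)"
        by (rule member_le_sum) (use x in auto)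
      ultimately have "\<mu> x \<le> m" using \<mu>(2) by linarith
      then show ?thesis by simp
    qed
    show "\<mu> x = 0" if "x \<notin> {1..K}"
      using that \<mu>(1) unfolding Part_def by (cases x) auto
  qed
qed (rule finite_set_of_finite_funs; simp)

lemma card_Part_weight_le:
  assumes "m \<le> K"
  shows "card {\<mu> \<in> Part K. (\<Sum>j = 1..K. j * \<mu> j) \<le> m} = (\<Sum>q = 0..m. pa q)"
proof -
  define A where "A q = {\<mu> \<in> Part q. (\<Sum>j = 1..q. j * \<mu> j) = q}" for q
  have "{\<mu> \<in> Part K. (\<Sum>j = 1..K. j * \<mu> j) \<le> m} = (\<Union>q\<in>{0..m}. A q)"
  proof (intro equalityI subsetI)
    fix \<mu> assume "\<mu> \<in> {\<mu> \<in> Part K. (\<Sum>j = 1..K. j * \<mu> j) \<le> m}"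
    then have \<mu>: "\<mu> \<in> Part K" "(\<Sum>j = 1..K. j * \<mu> j) \<le> m" by auto
    define q where "q = (\<Sum>j = 1..K. j * \<mu> j)"
    have "q \<le> m" using \<mu>(2) unfolding q_def .
    moreover have "\<mu> \<in> Part q" using Part_of_weight_le[OF \<mu>(1)] unfolding q_def by simp
    moreover have "(\<Sum>j = 1..q. j * \<mu> j) = q"
      using weight_Part_eq[OF \<open>\<mu> \<in> Part q\<close>, of K] \<open>q \<le> m\<close> assms q_def by linarith
    ultimately show "\<mu> \<in> (\<Union>q\<in>{0..m}. A q)" unfolding A_def by auto
  next
    fix \<mu> assume "\<mu> \<in> (\<Union>q\<in>{0..m}. A q)"
    then obtain q where q: "q \<le> m" "\<mu> \<in> Part q" "(\<Sum>j = 1..q. j * \<mu> j) = q"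
      unfolding A_def by auto
    then have "\<mu> \<in> Part K" using Part_mono[of q K] assms by auto
    moreover have "(\<Sum>j = 1..K. j * \<mu> j) = q"
      using weight_Part_eq[OF q(2), of K] q(1,3) assms by simp
    ultimately show "\<mu> \<in> {\<mu> \<in> Part K. (\<Sum>j = 1..K. j * \<mu> j) \<le> m}" using q(1) by simp
  qed
  moreover have "finite (A q)" for q
    by (rule finite_subset[OF _ finite_Part_weight_le[of q q]]) (auto simp: A_def)
  moreover have "A q \<inter> A q' = {}" if "q \<noteq> q'" for q q'
  proof -
    have "(\<Sum>j = 1..max q q'. j * \<mu> j) = q" "(\<Sum>j = 1..max q q'. j * \<mu> j) = q'"
      if "\<mu> \<in> A q" "\<mu> \<in> A q'" for \<mu>
      using that weight_Part_eq[of \<mu> q "max q q'"] weight_Part_eq[of \<mu> q' "max q q'"]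
      unfolding A_def by simp_all
    then show ?thesis using \<open>q \<noteq> q'\<close> by (metis disjoint_iff)
  qed
  ultimately have "card {\<mu> \<in> Part K. (\<Sum>j = 1..K. j * \<mu> j) \<le> m} = (\<Sum>q = 0..m. card (A q))"
    by (simp add: card_UN_disjoint)
  then show ?thesis unfolding A_def pa_def .
qed

lemma card_Part_wt_le:
  assumes "m \<le> int K"
  shows "finite {\<mu> \<in> Part K. wt (\<mu>, Suc K) \<le> m} \<and> card {\<mu> \<in> Part K. wt (\<mu>, Suc K) \<le> m} = pb m"
proof (cases "m < 0")
  case True
  then have empty: "{\<mu> \<in> Part K. wt (\<mu>, Suc K) \<le> m} = {}"
    using dg_nonneg dg_le_wt by (metis (no_types, lifting) empty_Collect_eq order.trans not_le)
  show ?thesis unfolding empty pb_def using True by simp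
next
  case False
  then have "wt (\<mu>, Suc K) \<le> m \<longleftrightarrow> (\<Sum>j = 1..K. j * \<mu> j) \<le> nat m" for \<mu>
    unfolding wt_Suc by (simp add: le_nat_iff del: of_nat_sum)
  then have "{\<mu> \<in> Part K. wt (\<mu>, Suc K) \<le> m} = {\<mu> \<in> Part K. (\<Sum>j = 1..K. j * \<mu> j) \<le> nat m}"
    by simp
  then show ?thesis
    using False assms card_Part_weight_le[of "nat m" K] finite_Part_weight_le unfolding pb_def by simp
qed

text \<open>On multiplicity vectors, shift_down deletes the parts equal to 1 and lowers every
  other part by one; shift_up x undoes this, restoring x parts equal to 1.\<close>
definition shift_down :: "(nat \<Rightarrow> nat) \<Rightarrow> nat \<Rightarrow> nat" where
  "shift_down L j = (if j = 0 then 0 else L (Suc j))"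

definition shift_up :: "nat \<Rightarrow> (nat \<Rightarrow> nat) \<Rightarrow> nat \<Rightarrow> nat" where
  "shift_up x \<mu> j = (if j = 0 then 0 else if j = 1 then x else \<mu> (j - 1))"

lemma shift_down_shift_up: "\<mu> 0 = 0 \<Longrightarrow> shift_down (shift_up x \<mu>) = \<mu>"
  by (auto simp: shift_down_def shift_up_def)

lemma shift_up_shift_down: "L 0 = 0 \<Longrightarrow> shift_up (L 1) (shift_down L) = L"
  by (auto simp: shift_down_def shift_up_def fun_eq_iff Suc_pred)

lemma shift_down_Part: "L \<in> Part (Suc K) \<Longrightarrow> shift_down L \<in> Part K"
  by (simp add: Part_def shift_down_def)

lemma shift_up_Part: "\<mu> \<in> Part K \<Longrightarrow> shift_up x \<mu> \<in> Part (Suc K)"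
  by (simp add: Part_def shift_up_def)

lemma wt_minus_dg_Suc: "wt (L, Suc k) - dg (L, Suc k) = wt (shift_down L, k)"
proof -
  have "wt (L, Suc k) - dg (L, Suc k) = (\<Sum>j = Suc 0..<Suc k. (int j - 1) * int (L j))"
    by (simp add: wt_minus_dg)
  also have "\<dots> = (\<Sum>j = 0..<k. int j * int (L (Suc j)))"
    by (subst sum.atLeast_Suc_lessThan_Suc_shift) simp
  also have "\<dots> = (\<Sum>j = 1..<k. int j * int (shift_down L j))"
    by (rule sum.mono_neutral_cong_right) (auto simp: shift_down_def)
  finally show ?thesis unfolding wt_def by simp
qed

lemma dg_Suc_Suc: "dg (L, Suc (Suc K)) = int (L 1) + dg (shift_down L, Suc K)"
proof -
  have "dg (L, Suc (Suc K)) = int (L 1) + (\<Sum>j = Suc 1..<Suc (Suc K). int (L j))"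
    unfolding dg_def by (subst sum.atLeast_Suc_lessThan) simp_all
  also have "(\<Sum>j = Suc 1..<Suc (Suc K). int (L j)) = dg (shift_down L, Suc K)"
    unfolding dg_def by (subst sum.atLeast_Suc_lessThan_Suc_shift) (simp add: shift_down_def)
  finally show ?thesis .
qed

lemma bij_betw_shift_down:
  fixes a h :: int
  assumes h: "0 \<le> h" and K: "int K \<le> h * a + 1"
  shows "bij_betw shift_down
    {L \<in> Part (Suc K). a \<le> int (Suc K) - wt (shift_down L, Suc K) \<and>
       int (L 1) + dg (shift_down L, Suc K) = h * (int (Suc K) - wt (shift_down L, Suc K)) + 2 - a}
    {\<mu> \<in> Part K. wt (\<mu>, Suc K) \<le> int (Suc K) - a}"
    (is "bij_betw _ ?S ?T")
proof -
  define x where "x \<mu> = h * (int (Suc K) - wt (\<mu>, Suc K)) + 2 - a - dg (\<mu>, Suc K)" for \<mu>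
  have x_nonneg: "0 \<le> x \<mu>" if "\<mu> \<in> ?T" for \<mu>
  proof -
    define E where "E = int (Suc K) - wt (\<mu>, Suc K)"
    have "a \<le> E" using that unfolding E_def by simp
    then have "(h + 1) * a \<le> (h + 1) * E" using h by (simp add: mult_left_mono)
    moreover have "dg (\<mu>, Suc K) \<le> int (Suc K) - E" using dg_le_wt unfolding E_def by simp
    ultimately show ?thesis using K unfolding x_def E_def[symmetric] by (simp add: algebra_simps)
  qed
  show ?thesis
  proof (rule bij_betw_byWitness[where f' = "\<lambda>\<mu>. shift_up (nat (x \<mu>)) \<mu>"])
    show "\<forall>L\<in>?S. shift_up (nat (x (shift_down L))) (shift_down L) = L"
    proof
      fix L assume L: "L \<in> ?S"
      then have "x (shift_down L) = int (L 1)" unfolding x_def by simp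
      then show "shift_up (nat (x (shift_down L))) (shift_down L) = L"
        using shift_up_shift_down[of L] L by (simp add: Part_def)
    qed
    show "\<forall>\<mu>\<in>?T. shift_down (shift_up (nat (x \<mu>)) \<mu>) = \<mu>"
      using shift_down_shift_up by (auto simp: Part_def)
    show "shift_down ` ?S \<subseteq> ?T"
      using shift_down_Part by auto
    show "(\<lambda>\<mu>. shift_up (nat (x \<mu>)) \<mu>) ` ?T \<subseteq> ?S"
      using shift_up_Part shift_down_shift_up x_nonneg by (auto simp: x_def Part_def shift_up_def)
  qed
qed

lemma BB_eq_UN_BBu: "BB n = (\<Union>k\<in>{1..n}. BBu n k)"
  unfolding BB_def BBu_def by auto

lemma LL_inter_BBu_eq:
  assumes n: "3 \<le> n" and i: "0 \<le> i" and k: "1 \<le> k" "k \<le> n"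
  shows "LL n i \<inter> BBu n k = (\<lambda>L. (L, k)) `
    {L \<in> Part (k - 1). int n - rr n i \<le> int k - 1 - (wt (L, k) - dg (L, k)) \<and>
       dg (L, k) = hh n i * (int k - 1 - (wt (L, k) - dg (L, k))) + 2 - (int n - rr n i)}"
proof -
  have E: "int n - 1 - WD n (L, k) = int k - 1 - (wt (L, k) - dg (L, k))" for L
    unfolding WD_def by simp
  have "(L, k) \<in> LL n i \<longleftrightarrow> L \<in> Part (k - 1) \<and>
      int n - rr n i \<le> int k - 1 - (wt (L, k) - dg (L, k)) \<and>
      dg (L, k) = hh n i * (int k - 1 - (wt (L, k) - dg (L, k))) + 2 - (int n - rr n i)" for L
    using mem_LL_iff[OF n i, of "(L, k)"] k unfolding E BB_def by simp
  then show ?thesis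
    using LL_subset_BB unfolding BBu_def by (auto simp: image_iff)
qed

lemma card_LL_inter_BBu:
  assumes n: "3 \<le> n" and i: "0 \<le> i" and h: "int n - 3 \<le> hh n i" and k: "1 \<le> k" "k \<le> n"
  shows "finite (LL n i \<inter> BBu n k) \<and> card (LL n i \<inter> BBu n k) = pb (rr n i + int k - int n - 1)"
proof -
  define a where "a = int n - rr n i"
  define S where "S = {L \<in> Part (k - 1). a \<le> int k - 1 - (wt (L, k) - dg (L, k)) \<and>
       dg (L, k) = hh n i * (int k - 1 - (wt (L, k) - dg (L, k))) + 2 - a}"
  have a: "1 \<le> a" "a \<le> int n - 1" using rr_bounds[of n i] n unfolding a_def by auto
  have "finite S \<and> card S = pb (int k - 1 - a)"
  proof (cases "k = 1")
    case True
    then have "S = {}" using a unfolding S_def wt_minus_dg by simp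
    then show ?thesis using True a unfolding pb_def by simp
  next
    case False
    define K where "K = k - 2"
    have K: "k = Suc (Suc K)" using k False unfolding K_def by simp
    have "int K \<le> hh n i * a + 1"
      using mult_left_mono[OF a(1), of "hh n i"] h n k K by simp
    then have "bij_betw shift_down S {\<mu> \<in> Part K. wt (\<mu>, Suc K) \<le> int (Suc K) - a}"
      using bij_betw_shift_down[of "hh n i" K a] h n
      unfolding S_def K wt_minus_dg_Suc unfolding dg_Suc_Suc by simp
    then show ?thesis
      using card_Part_wt_le[of "int (Suc K) - a" K] a K
      by (simp add: bij_betw_finite bij_betw_same_card)
  qed
  moreover have "card ((\<lambda>L. (L, k)) ` S) = card S" by (rule card_image) (simp add: inj_on_def)
  moreover have "int k - 1 - a = rr n i + int k - int n - 1" unfolding a_def by simp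
  ultimately show ?thesis
    unfolding LL_inter_BBu_eq[OF n i k] a_def[symmetric] S_def[symmetric] by simp
qed

lemma pc_plus_one: "pc (x + 1) = pc x + pb (x + 1)"
proof (cases "x + 1 < 0")
  case True
  then show ?thesis unfolding pc_def by (simp add: pb_def)
next
  case False
  then have "{0..1 + x} = insert (1 + x) {0..x}" by (intro atLeastAtMostPlus1_int_conv) simp
  then show ?thesis unfolding pc_def by (simp add: add.commute)
qed

lemma sum_pb_eq_pc: "x < 0 \<Longrightarrow> (\<Sum>k = 1..m. pb (x + int k)) = pc (x + int m)"
proof (induction m)
  case 0
  then show ?case unfolding pc_def by simp
next
  case (Suc m)
  then show ?case using pc_plus_one[of "x + int m"] by (simp add: ac_simps)
qed

theorem corollary2p16:
  fixes n k :: nat and i :: int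
  assumes "n \<ge> 3" and "i \<ge> 0" and "i > (int n - 4) * (int n - 1)"
    and "1 \<le> k" and "k \<le> n"
  shows "finite (LL n i \<inter> BBu n k)
       \<and> card (LL n i \<inter> BBu n k) = pb (rr n i + int k - int n - 1)
       \<and> finite (LL n i) \<and> card (LL n i) = pc (rr n i - 1)"
proof -
  have "int n - 3 \<le> hh n i" using hh_lower_bound assms(1,3) by simp
  then have slice: "finite (LL n i \<inter> BBu n k')
      \<and> card (LL n i \<inter> BBu n k') = pb (rr n i - int n - 1 + int k')" if "k' \<in> {1..n}" for k'
    using card_LL_inter_BBu[OF assms(1,2)] that by (simp add: algebra_simps)
  have LL_eq: "LL n i = (\<Union>k'\<in>{1..n}. LL n i \<inter> BBu n k')"
    using LL_subset_BB[of n i] BB_eq_UN_BBu[of n] by blast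
  have LL_finite: "finite (LL n i)" by (subst LL_eq) (use slice in blast)
  have "card (LL n i) = (\<Sum>k' = 1..n. card (LL n i \<inter> BBu n k'))"
    by (subst LL_eq, rule card_UN_disjoint) (use slice in \<open>auto simp: BBu_def\<close>)
  also have "\<dots> = pc (rr n i - 1)"
    using slice sum_pb_eq_pc[of "rr n i - int n - 1" n] rr_bounds[of n i] assms(1) by simp
  finally show ?thesis using LL_finite slice assms(4,5) by (simp add: algebra_simps)
qed

end
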